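(* Let $\mathit{VI}$ be a finite set of variables with $\#\mathit{VI}=n$ and let $1\le k\le n$. For each $sh_1,sh_2\in\mathit{SH}$, if $\rho_{\mathit{TSD}_k}(sh_1)\ne\rho_{\mathit{TSD}_k}(sh_2)$ then there exist $\sigma\in\mathit{Subst}$ and $j\in\{1,\dots,k\}$ such that $\rho_{\mathit{TS}_j}(\mathrm{amgu}(sh_1,\sigma))\ne\rho_{\mathit{TS}_j}(\mathrm{amgu}(sh_2,\sigma))$.
   Context: $\mathit{SG}=\wp(\mathit{VI})\setminus\{\emptyset\}$ and $\mathit{SH}=\wp(\mathit{SG})$. $\rho_{\mathit{TSD}_k}(sh)=\{\,S\in\mathit{SG}\mid \forall T\subseteq S:\ \#T<k\implies S=\bigcup\{U\in sh\mid T\subseteq U\subseteq S\}\,\}$. For $S\in\mathit{SG}$, $\mathrm{tuples}_j(S)=\{T\subseteq S\mid\#T=j\}$, $\mathrm{tuples}_j(sh)=\bigcup_{S'\in sh}\mathrm{tuples}_j(S')$, and $\rho_{\mathit{TS}_j}(sh)=\{S\in\mathit{SG}\mid\mathrm{tuples}_j(S)\subseteq\mathrm{tuples}_j(sh)\}$. Terms are first-order terms (ground terms exist); $\mathrm{vars}(t)$ is the set of variables of $t$. $\mathit{Subst}$ is the set of idempotent substitutions (finite sets of bindings $x\mapsto t$, $t\ne x$), with variables in $\mathit{VI}$. $\mathrm{bin}(sh_1,sh_2)=\{S_1\cup S_2\mid S_i\in sh_i\}$; $sh^\star=\{S\in\mathit{SG}\mid\exists sh'\subseteq sh: S=\bigcup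 sh'\}$; $\mathrm{rel}(V,sh)=\{S\in sh\mid S\cap V\ne\emptyset\}$; with $v_x=\{x\}$, $v_t=\mathrm{vars}(t)$, $v_{xt}=v_x\cup v_t$: $\mathrm{amgu}(sh,x\mapsto t)=(sh\setminus\mathrm{rel}(v_{xt},sh))\cup\mathrm{bin}(\mathrm{rel}(v_x,sh)^\star,\mathrm{rel}(v_t,sh)^\star)$; $\mathrm{amgu}(sh,\emptyset)=sh$ and $\mathrm{amgu}(sh,\{x\mapsto t\}\cup\sigma)=\mathrm{amgu}(\mathrm{amgu}(sh,x\mapsto t),\sigma\setminus\{x\mapsto t\})$. *)

theory Defs
  imports Main
begin

datatype ('v, 'f) fterm = Var 'v | Fun 'f "('v, 'f) fterm list"

fun vars :: "('v, 'f) fterm \<Rightarrow> 'v set" where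
  "vars (Var x) = {x}"
| "vars (Fun f ts) = (\<Union>t \<in> set ts. vars t)"

type_synonym ('v, 'f) binding = "'v \<times> ('v, 'f) fterm"

fun subst_apply :: "('v, 'f) binding list \<Rightarrow> ('v, 'f) fterm \<Rightarrow> ('v, 'f) fterm" where
  "subst_apply \<sigma> (Var x) = (case map_of \<sigma> x of Some t \<Rightarrow> t | None \<Rightarrow> Var x)"
| "subst_apply \<sigma> (Fun f ts) = Fun f (map (subst_apply \<sigma>) ts)"

definition is_Subst :: "'v set \<Rightarrow> ('v, 'f) binding list \<Rightarrow> bool" where
  "is_Subst VI \<sigma> \<longleftrightarrow>
     distinct (map fst \<sigma>)
   \<and> (\<forall>(x, t) \<in> set \<sigma>. t \<noteq> Var x \<and> x \<in> VI \<and> vars t \<subseteq> VI)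
   \<and> (\<forall>t. subst_apply \<sigma> (subst_apply \<sigma> t) = subst_apply \<sigma> t)"

definition SG :: "'v set \<Rightarrow> 'v set set" where
  "SG VI = {S. S \<subseteq> VI \<and> S \<noteq> {}}"

definition SH :: "'v set \<Rightarrow> 'v set set set" where
  "SH VI = Pow (SG VI)"

definition rho_TSD :: "'v set \<Rightarrow> nat \<Rightarrow> 'v set set \<Rightarrow> 'v set set" where
  "rho_TSD VI k sh = {S \<in> SG VI. \<forall>T. T \<subseteq> S \<longrightarrow> card T < k \<longrightarrow>
                         S = \<Union>{U \<in> sh. T \<subseteq> U \<and> U \<subseteq> S}}"

definition tuples :: "nat \<Rightarrow> 'v set \<Rightarrow> 'v set set" where
  "tuples j S = {T. T \<subseteq> S \<and> card T = j}"

definition tuples_sh :: "nat \<Rightarrow> 'v set set \<Rightarrow> 'v set set" where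
  "tuples_sh j sh = (\<Union>S' \<in> sh. tuples j S')"

definition rho_TS :: "'v set \<Rightarrow> nat \<Rightarrow> 'v set set \<Rightarrow> 'v set set" where
  "rho_TS VI j sh = {S \<in> SG VI. tuples j S \<subseteq> tuples_sh j sh}"

definition bin :: "'v set set \<Rightarrow> 'v set set \<Rightarrow> 'v set set" where
  "bin sh1 sh2 = {S1 \<union> S2 | S1 S2. S1 \<in> sh1 \<and> S2 \<in> sh2}"

definition star :: "'v set \<Rightarrow> 'v set set \<Rightarrow> 'v set set" where
  "star VI sh = {S \<in> SG VI. \<exists>sh' \<subseteq> sh. S = \<Union>sh'}"

definition rel :: "'v set \<Rightarrow> 'v set set \<Rightarrow> 'v set set" where
  "rel V sh = {S \<in> sh. S \<inter> V \<noteq> {}}"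

definition amgu1 :: "'v set \<Rightarrow> 'v set set \<Rightarrow> ('v, 'f) binding \<Rightarrow> 'v set set" where
  "amgu1 VI sh b = (case b of (x, t) \<Rightarrow>
     (sh - rel ({x} \<union> vars t) sh) \<union> bin (star VI (rel {x} sh)) (star VI (rel (vars t) sh)))"

fun amgu :: "'v set \<Rightarrow> 'v set set \<Rightarrow> ('v, 'f) binding list \<Rightarrow> 'v set set" where
  "amgu VI sh [] = sh"
| "amgu VI sh (b # \<sigma>) = amgu VI (amgu1 VI sh b) \<sigma>"

end

theory Submission
  imports Defs
begin

text \<open>
  Take a sharing group S that is in \<open>\<rho>_TSD_k(sh1)\<close> but not in \<open>\<rho>_TSD_k(sh2)\<close>.
  Then some T \<subseteq> S with #T < k and some y \<in> S are such that a group of sh1 between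
  T and S contains y while no group of sh2 between T and S does; so R = T \<union> {y}
  is a tuple of size at most k.  Binding every variable outside S to a constant
  removes exactly the groups not contained in S, after which R is a tuple of the
  first sharing set but not of the second, which \<open>\<rho>_TS_#R\<close> detects.
\<close>

definition ground_subst :: "'f \<Rightarrow> 'v list \<Rightarrow> ('v, 'f) binding list" where
  "ground_subst c xs = map (\<lambda>x. (x, Fun c [])) xs"

lemma star_empty [simp]: "star VI {} = {}"
  unfolding star_def SG_def by auto

lemma amgu1_ground: "amgu1 VI sh (x, Fun c []) = {U \<in> sh. x \<notin> U}"
  unfolding amgu1_def rel_def bin_def by auto

lemma amgu_ground_subst: "amgu VI sh (ground_subst c xs) = {U \<in> sh. U \<inter> set xs = {}}"
  by (induction xs arbitrary: sh) (auto simp: ground_subst_def amgu1_ground)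

lemma subst_apply_ground_subst_idem:
  "subst_apply (ground_subst c xs) (subst_apply (ground_subst c xs) t)
     = subst_apply (ground_subst c xs) t"
proof (induction t)
  case (Var x)
  then show ?case
    by (auto simp: ground_subst_def split: option.splits dest!: map_of_SomeD)
next
  case (Fun f ts)
  then show ?case by (auto intro: map_cong)
qed

lemma is_Subst_ground_subst:
  assumes "distinct xs" and "set xs \<subseteq> VI"
  shows "is_Subst VI (ground_subst c xs)"
  unfolding is_Subst_def using assms subst_apply_ground_subst_idem[of c xs]
  by (auto simp: ground_subst_def comp_def)

lemma amgu_ground_subst_complement:
  assumes "sh \<subseteq> SG VI" and "set xs = VI - S"
  shows "amgu VI sh (ground_subst c xs) = {U \<in> sh. U \<subseteq> S}"
  using assms unfolding amgu_ground_subst SG_def by auto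

lemma mem_rho_TS_card_iff:
  assumes "R \<in> SG VI" and "finite R"
  shows "R \<in> rho_TS VI (card R) sh \<longleftrightarrow> (\<exists>U \<in> sh. R \<subseteq> U)"
proof -
  have "tuples (card R) R = {R}"
    unfolding tuples_def using card_subset_eq[OF \<open>finite R\<close>] by auto
  then show ?thesis
    using assms(1) unfolding rho_TS_def tuples_sh_def tuples_def by auto
qed

lemma rho_TSD_separating_tuple:
  assumes in1: "S \<in> rho_TSD VI k sh1" and notin2: "S \<notin> rho_TSD VI k sh2"
    and "finite S"
  obtains R where "R \<subseteq> S" "R \<noteq> {}" "card R \<le> k"
    "\<exists>U \<in> sh1. R \<subseteq> U \<and> U \<subseteq> S" "\<not> (\<exists>U \<in> sh2. R \<subseteq> U \<and> U \<subseteq> S)"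
proof -
  have "S \<in> SG VI" using in1 unfolding rho_TSD_def by auto
  then obtain T where T: "T \<subseteq> S" "card T < k" "S \<noteq> \<Union>{U \<in> sh2. T \<subseteq> U \<and> U \<subseteq> S}"
    using notin2 unfolding rho_TSD_def by auto
  then obtain y where y: "y \<in> S" "\<And>U. U \<in> sh2 \<Longrightarrow> T \<subseteq> U \<Longrightarrow> U \<subseteq> S \<Longrightarrow> y \<notin> U"
    by blast
  have "S = \<Union>{U \<in> sh1. T \<subseteq> U \<and> U \<subseteq> S}"
    using in1 T(1,2) unfolding rho_TSD_def by auto
  then obtain U1 where "U1 \<in> sh1" "T \<subseteq> U1" "U1 \<subseteq> S" "y \<in> U1"
    using y(1) by blast
  moreover have "card (insert y T) \<le> k"
    using T(1,2) \<open>finite S\<close> by (simp add: card_insert_if finite_subset)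
  ultimately show thesis
    by (intro that[of "insert y T"]) (use T(1) y in auto)
qed

lemma rho_TS_separated_by_ground_subst:
  assumes "finite VI" and sh: "sh1 \<subseteq> SG VI" "sh2 \<subseteq> SG VI"
    and in1: "S \<in> rho_TSD VI k sh1" and notin2: "S \<notin> rho_TSD VI k sh2"
  shows "\<exists>(\<sigma> :: ('v, 'f) binding list) j. is_Subst VI \<sigma> \<and> j \<in> {1..k} \<and>
           rho_TS VI j (amgu VI sh1 \<sigma>) \<noteq> rho_TS VI j (amgu VI sh2 \<sigma>)"
proof -
  have "S \<subseteq> VI" using in1 unfolding rho_TSD_def SG_def by auto
  then have "finite S" using \<open>finite VI\<close> finite_subset by blast
  with in1 notin2 obtain R where R: "R \<subseteq> S" "R \<noteq> {}" "card R \<le> k"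
    "\<exists>U \<in> sh1. R \<subseteq> U \<and> U \<subseteq> S" "\<not> (\<exists>U \<in> sh2. R \<subseteq> U \<and> U \<subseteq> S)"
    by (rule rho_TSD_separating_tuple)
  have "finite R" using R(1) \<open>finite S\<close> finite_subset by blast
  have "R \<in> SG VI" using R(1,2) \<open>S \<subseteq> VI\<close> unfolding SG_def by auto
  obtain xs where xs: "set xs = VI - S" "distinct xs"
    using finite_distinct_list[of "VI - S"] \<open>finite VI\<close> by auto
  define \<sigma> :: "('v, 'f) binding list" where "\<sigma> = ground_subst undefined xs"
  have "is_Subst VI \<sigma>"
    unfolding \<sigma>_def using xs by (intro is_Subst_ground_subst) auto
  moreover have "card R \<in> {1..k}"
    using R(2,3) \<open>finite R\<close> by (simp add: Suc_le_eq card_gt_0_iff)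
  moreover have "R \<in> rho_TS VI (card R) (amgu VI sh1 \<sigma>)"
    and "R \<notin> rho_TS VI (card R) (amgu VI sh2 \<sigma>)"
    unfolding \<sigma>_def amgu_ground_subst_complement[OF sh(1) xs(1)]
      amgu_ground_subst_complement[OF sh(2) xs(1)]
      mem_rho_TS_card_iff[OF \<open>R \<in> SG VI\<close> \<open>finite R\<close>]
    using R(4,5) by auto
  ultimately show ?thesis by blast
qed

theorem theorem3p17:
  fixes VI :: "'v set" and n k :: nat and sh1 sh2 :: "'v set set"
  assumes "finite VI" and "card VI = n" and "1 \<le> k" and "k \<le> n"
    and "sh1 \<in> SH VI" and "sh2 \<in> SH VI"
    and "rho_TSD VI k sh1 \<noteq> rho_TSD VI k sh2"
  shows "\<exists>(\<sigma> :: ('v, 'f) binding list) j. is_Subst VI \<sigma> \<and> j \<in> {1..k} \<and>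
           rho_TS VI j (amgu VI sh1 \<sigma>) \<noteq> rho_TS VI j (amgu VI sh2 \<sigma>)"
proof -
  have sh: "sh1 \<subseteq> SG VI" "sh2 \<subseteq> SG VI"
    using assms(5,6) unfolding SH_def by auto
  from assms(7) obtain S where
    "S \<in> rho_TSD VI k sh1 \<and> S \<notin> rho_TSD VI k sh2 \<or>
     S \<in> rho_TSD VI k sh2 \<and> S \<notin> rho_TSD VI k sh1"
    by blast
  then show ?thesis
    using rho_TS_separated_by_ground_subst[OF assms(1) sh(1,2), of S k]
      rho_TS_separated_by_ground_subst[OF assms(1) sh(2,1), of S k]
    by (metis (no_types))
qed

end
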